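(* The (a priori) Recursive Measure satisfies the strong subadditivity blocker postulate. For every SVG $\mathcal{G}$ on $N$ and every bloc $I\subseteq N$ that contains at least one YES-blocker, or that contains at least one NO-blocker, we have $$\widehat{RM'}_I\le\sum_{k\in I}RM'_k(\mathcal{G}).$$ Consequently RM also satisfies the weak subadditivity blocker postulate.
   Context: A simple voting game (SVG) is a pair $\mathcal{G}=(N,\mathcal{W})$ with $N$ a nonempty finite set of $n$ players and $\mathcal{W}\subseteq 2^N$ (the winning sets) such that: - $\mathcal{W}$ is monotone; - $\emptyset\notin\mathcal{W}$ and $N\in\mathcal{W}$. A division is $(S,N\setminus S)$ with $S\subseteq N$ the YES-voters; it is winning if $S\in\mathcal{W}$ and losing otherwise. Decisiveness and success: - Player $k$ is YES-decisive in $S$ if $k\in S\in\mathcal{W}$ and $S\setminus\{k\}\notin\mathcal{W}$. - Player $k$ is NO-decisive in $S$ if $k\notin S\notin\mathcal{W}$ and $S\cup\{k\}\in\mathcal{W}$. - Player $k$ is decisive if it is either. - Player $k$ is successful in $S$ if ($k\in S$ and $S\in\mathcal{W}$) or ($k\notin S$ and $S\notin\mathcal{W}$). Loyal children: if $S\in\mathcal{W}$, the loyal children of $S$ are the divisions $S\setminus\{m\}$ with $m\in S$ and $S\setminus\{m\}\in\mathcal{W}$. If $S\notin\mathcal{W}$, they are the divisions $S\cup\{m\}$ with $m\notin S$ and $S\cup\{m\}\notin\mathcal{W}$. The recursive efficacy score $\alpha_k(S)$ is defined by: - $\alpha_k(S)=1$ if $k$ is decisive in $S$; - $\alpha_k(S)=0$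 if $k$ is not successful in $S$; - otherwise, $\alpha_k(S)$ is the average of $\alpha_k$ over the (nonempty) set of loyal children of $S$. The a priori Recursive Measure is $RM'_k=2^{-n}\sum_{S\subseteq N}\alpha_k(S)$. Blockers: $b$ is a YES-blocker if $b\in S$ for all $S\in\mathcal{W}$, and a NO-blocker if $b\notin S$ for all $S\notin\mathcal{W}$. Bloc game: for a bloc $I$ with lead member $i\in I$, $\hat{\mathcal{G}}$ has players $(N\setminus I)\cup\{i\}$ and winning sets $$\{S\cup\{i\}:S\subseteq N\setminus I,\ S\cup I\in\mathcal{W}\}\cup\{S:S\subseteq N\setminus I,\ S\in\mathcal{W}\}.$$ $\widehat{RM'}_I$ is $RM'_i$ in $\hat{\mathcal{G}}$. *)

theory Defs
  imports Complex_Main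
begin

definition svg :: "'a set \<Rightarrow> 'a set set \<Rightarrow> bool" where
  "svg N W \<longleftrightarrow> finite N \<and> N \<noteq> {} \<and> W \<subseteq> Pow N
     \<and> (\<forall>S T. S \<in> W \<and> S \<subseteq> T \<and> T \<subseteq> N \<longrightarrow> T \<in> W)
     \<and> {} \<notin> W \<and> N \<in> W"

definition yes_decisive :: "'a set set \<Rightarrow> 'a \<Rightarrow> 'a set \<Rightarrow> bool" where
  "yes_decisive W k S \<longleftrightarrow> k \<in> S \<and> S \<in> W \<and> S - {k} \<notin> W"

definition no_decisive :: "'a set set \<Rightarrow> 'a \<Rightarrow> 'a set \<Rightarrow> bool" where
  "no_decisive W k S \<longleftrightarrow> k \<notin> S \<and> S \<notin> W \<and> insert k S \<in> W"

definition decisive :: "'a set set \<Rightarrow> 'a \<Rightarrow> 'a set \<Rightarrow> bool" where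
  "decisive W k S \<longleftrightarrow> yes_decisive W k S \<or> no_decisive W k S"

definition successful :: "'a set set \<Rightarrow> 'a \<Rightarrow> 'a set \<Rightarrow> bool" where
  "successful W k S \<longleftrightarrow> (k \<in> S \<and> S \<in> W) \<or> (k \<notin> S \<and> S \<notin> W)"

definition loyal_children :: "'a set \<Rightarrow> 'a set set \<Rightarrow> 'a set \<Rightarrow> 'a set set" where
  "loyal_children N W S =
     (if S \<in> W then {S - {m} | m. m \<in> S \<and> S - {m} \<in> W}
      else {insert m S | m. m \<in> N \<and> m \<notin> S \<and> insert m S \<notin> W})"

text \<open>Along loyal children, winning divisions strictly shrink and losing divisions
  strictly grow, so depth card N + 1 always suffices to reach a base case;
  hence alpha below coincides with the paper's recursive definition.\<close>
fun alpha_fuel :: "nat \<Rightarrow> 'a set \<Rightarrow> 'a set set \<Rightarrow> 'a \<Rightarrow> 'a set \<Rightarrow> real" where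
  "alpha_fuel 0 N W k S = 0"
| "alpha_fuel (Suc d) N W k S =
     (if decisive W k S then 1
      else if \<not> successful W k S then 0
      else (\<Sum>T\<in>loyal_children N W S. alpha_fuel d N W k T) / real (card (loyal_children N W S)))"

definition alpha :: "'a set \<Rightarrow> 'a set set \<Rightarrow> 'a \<Rightarrow> 'a set \<Rightarrow> real" where
  "alpha N W k S = alpha_fuel (Suc (card N)) N W k S"

definition RM' :: "'a set \<Rightarrow> 'a set set \<Rightarrow> 'a \<Rightarrow> real" where
  "RM' N W k = (\<Sum>S\<in>Pow N. alpha N W k S) / 2 ^ card N"

definition yes_blocker :: "'a set set \<Rightarrow> 'a \<Rightarrow> bool" where
  "yes_blocker W b \<longleftrightarrow> (\<forall>S\<in>W. b \<in> S)"

definition no_blocker :: "'a set \<Rightarrow> 'a set set \<Rightarrow> 'a \<Rightarrow> bool" where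
  "no_blocker N W b \<longleftrightarrow> (\<forall>S\<in>Pow N. S \<notin> W \<longrightarrow> b \<notin> S)"

definition bloc_players :: "'a set \<Rightarrow> 'a set \<Rightarrow> 'a \<Rightarrow> 'a set" where
  "bloc_players N I i = (N - I) \<union> {i}"

definition bloc_W :: "'a set \<Rightarrow> 'a set set \<Rightarrow> 'a set \<Rightarrow> 'a \<Rightarrow> 'a set set" where
  "bloc_W N W I i =
     {S \<union> {i} | S. S \<subseteq> N - I \<and> S \<union> I \<in> W} \<union> {S. S \<subseteq> N - I \<and> S \<in> W}"

end

theory Submission
  imports Defs
begin

text \<open>
  The score is superharmonic along loyal children (at a successful, non-decisive division it is
  the mean over the children), hence so is the total score of the bloc I, and that total is at
  least 1 at every division that I can swing.  If b \<in> I is a YES-blocker, the lead member's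
  score at a division S of the bloc game in which it votes NO is bounded, for every
  J \<subseteq> I - {b}, by the total score of I at S \<union> J (induction on the number of NO-voters,
  comparing the children of both divisions), while its score at S \<union> {i} is the indicator of
  S \<union> I winning.  Charging each bloc division to 2 ^ (card I - 1) divisions of N gives the
  inequality.  The NO-blocker case is dual: complementing divisions swaps winning and losing
  and YES- and NO-blockers, preserves every score, and commutes with forming the bloc game.
\<close>

lemma svg_winning_mono: "svg N W \<Longrightarrow> S \<in> W \<Longrightarrow> S \<subseteq> T \<Longrightarrow> T \<subseteq> N \<Longrightarrow> T \<in> W"
  unfolding svg_def by blast

lemma loyal_children_winning:
  "S \<in> W \<Longrightarrow> loyal_children N W S = (\<lambda>m. S - {m}) ` {m \<in> S. S - {m} \<in> W}"
  unfolding loyal_children_def by auto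

lemma loyal_children_losing:
  "S \<notin> W \<Longrightarrow> loyal_children N W S = (\<lambda>m. insert m S) ` {m \<in> N - S. insert m S \<notin> W}"
  unfolding loyal_children_def by auto

definition loyal_rank :: "'a set \<Rightarrow> 'a set set \<Rightarrow> 'a set \<Rightarrow> nat" where
  "loyal_rank N W S = (if S \<in> W then card S else card (N - S))"

lemma loyal_children_subset:
  assumes "S \<subseteq> N" "T \<in> loyal_children N W S"
  shows "T \<subseteq> N"
  using assms by (auto simp: loyal_children_def split: if_splits)

lemma loyal_rank_less:
  assumes "finite N" "S \<subseteq> N" "T \<in> loyal_children N W S"
  shows "loyal_rank N W T < loyal_rank N W S"
proof (cases "S \<in> W")
  case True
  then obtain m where m: "T = S - {m}" "m \<in> S" "S - {m} \<in> W"
    using assms(3) by (auto simp: loyal_children_def)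
  have "card (S - {m}) < card S"
    using m(2) assms(1,2) by (meson card_Diff1_less finite_subset)
  then show ?thesis using True m by (simp add: loyal_rank_def)
next
  case False
  then obtain m where m: "T = insert m S" "m \<in> N" "m \<notin> S" "insert m S \<notin> W"
    using assms(3) by (auto simp: loyal_children_def)
  have "N - insert m S = (N - S) - {m}" by auto
  then have "card (N - insert m S) < card (N - S)"
    using m assms(1) by (metis DiffI card_Diff1_less finite_Diff)
  then show ?thesis using False m by (simp add: loyal_rank_def)
qed

lemma finite_loyal_children:
  "finite N \<Longrightarrow> S \<subseteq> N \<Longrightarrow> finite (loyal_children N W S)"
  by (rule finite_subset[of _ "Pow N"]) (auto dest: loyal_children_subset)

lemma alpha_fuel_Suc:
  assumes "finite N"
  shows "S \<subseteq> N \<Longrightarrow> loyal_rank N W S < d \<Longrightarrow> alpha_fuel d N W k S = alpha_fuel (Suc d) N W k S"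
proof (induction d arbitrary: S)
  case (Suc d)
  have "alpha_fuel d N W k T = alpha_fuel (Suc d) N W k T" if "T \<in> loyal_children N W S" for T
  proof (rule Suc.IH)
    show "T \<subseteq> N" using loyal_children_subset Suc.prems(1) that .
    show "loyal_rank N W T < d" using loyal_rank_less[OF assms Suc.prems(1) that] Suc.prems(2) by simp
  qed
  then show ?case by (simp del: alpha_fuel.simps(2) add: alpha_fuel.simps(2)[of "Suc d"]
        alpha_fuel.simps(2)[of d] cong: sum.cong)
qed simp

lemma alpha_unfold:
  assumes "finite N" "S \<subseteq> N"
  shows "alpha N W k S = (if decisive W k S then 1 else if \<not> successful W k S then 0
     else (\<Sum>T\<in>loyal_children N W S. alpha N W k T) / real (card (loyal_children N W S)))"
proof -
  have rank: "loyal_rank N W S \<le> card N"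
    using assms by (auto simp: loyal_rank_def card_mono)
  have "alpha_fuel (card N) N W k T = alpha N W k T" if "T \<in> loyal_children N W S" for T
    unfolding alpha_def
  proof (rule alpha_fuel_Suc[OF assms(1)])
    show "T \<subseteq> N" using loyal_children_subset assms(2) that .
    show "loyal_rank N W T < card N" using loyal_rank_less[OF assms that] rank by simp
  qed
  then show ?thesis unfolding alpha_def[of N W k S] by (simp cong: sum.cong)
qed

lemma alpha_fuel_bounds: "0 \<le> alpha_fuel d N W k S \<and> alpha_fuel d N W k S \<le> 1"
proof (induction d arbitrary: S)
  case (Suc d)
  let ?C = "loyal_children N W S"
  have "0 \<le> (\<Sum>T\<in>?C. alpha_fuel d N W k T)" "(\<Sum>T\<in>?C. alpha_fuel d N W k T) \<le> real (card ?C)"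
    using Suc.IH sum_bounded_above[of ?C "alpha_fuel d N W k" 1] by (auto intro: sum_nonneg)
  then show ?case by (cases "card ?C = 0") (auto simp: divide_le_eq)
qed simp

lemma alpha_nonneg: "0 \<le> alpha N W k S"
  unfolding alpha_def by (rule conjunct1[OF alpha_fuel_bounds])

lemma alpha_le_1: "alpha N W k S \<le> 1"
  unfolding alpha_def by (rule conjunct2[OF alpha_fuel_bounds])

lemma alpha_decisive: "decisive W k S \<Longrightarrow> alpha N W k S = 1"
  unfolding alpha_def by simp

lemma alpha_unsuccessful: "\<not> successful W k S \<Longrightarrow> alpha N W k S = 0"
  unfolding alpha_def by (auto simp: decisive_def yes_decisive_def no_decisive_def successful_def)

lemma sum_alpha_loyal_children_le:
  assumes "finite N" "S \<subseteq> N"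
  shows "(\<Sum>T\<in>loyal_children N W S. alpha N W k T) \<le> alpha N W k S * real (card (loyal_children N W S))"
proof -
  let ?C = "loyal_children N W S"
  consider "decisive W k S" | "\<not> successful W k S" | "\<not> decisive W k S" "successful W k S"
    by blast
  then show ?thesis
  proof cases
    case 1
    then show ?thesis using sum_bounded_above[of ?C "alpha N W k" 1, OF alpha_le_1] by (simp add: alpha_decisive)
  next
    case 2
    then have "\<not> successful W k T" if "T \<in> ?C" for T
      using that by (auto simp: loyal_children_def successful_def split: if_splits)
    then show ?thesis using alpha_unsuccessful[of W k] alpha_nonneg[of N W k S] by simp
  next
    case 3
    then show ?thesis using alpha_unfold[OF assms, of W k] finite_loyal_children[OF assms, of W]
      by (cases "card ?C = 0") simp_all
  qed
qed

definition alpha_sum :: "'a set \<Rightarrow> 'a set set \<Rightarrow> 'a set \<Rightarrow> 'a set \<Rightarrow> real" where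
  "alpha_sum N W I S = (\<Sum>k\<in>I. alpha N W k S)"

lemma alpha_sum_nonneg: "0 \<le> alpha_sum N W I S"
  unfolding alpha_sum_def by (simp add: sum_nonneg alpha_nonneg)

lemma alpha_le_alpha_sum: "finite I \<Longrightarrow> k \<in> I \<Longrightarrow> alpha N W k S \<le> alpha_sum N W I S"
  unfolding alpha_sum_def by (rule member_le_sum) (auto simp: alpha_nonneg)

lemma alpha_sum_ge_1_if_decisive:
  "finite I \<Longrightarrow> k \<in> I \<Longrightarrow> decisive W k S \<Longrightarrow> 1 \<le> alpha_sum N W I S"
  using alpha_le_alpha_sum alpha_decisive by metis

lemma sum_alpha_sum_loyal_children_le:
  assumes "finite N" "S \<subseteq> N"
  shows "(\<Sum>T\<in>loyal_children N W S. alpha_sum N W I T)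
    \<le> alpha_sum N W I S * real (card (loyal_children N W S))"
proof -
  have "(\<Sum>T\<in>loyal_children N W S. alpha_sum N W I T)
      = (\<Sum>k\<in>I. \<Sum>T\<in>loyal_children N W S. alpha N W k T)"
    unfolding alpha_sum_def by (rule sum.swap)
  also have "\<dots> \<le> (\<Sum>k\<in>I. alpha N W k S * real (card (loyal_children N W S)))"
    by (intro sum_mono sum_alpha_loyal_children_le assms)
  finally show ?thesis by (simp add: alpha_sum_def sum_distrib_right)
qed

lemma alpha_sum_ge_if_loyal_children_ge:
  assumes "finite N" "S \<subseteq> N" "loyal_children N W S \<noteq> {}"
    and "\<And>T. T \<in> loyal_children N W S \<Longrightarrow> c \<le> alpha_sum N W I T"
  shows "c \<le> alpha_sum N W I S"
proof -
  let ?C = "loyal_children N W S"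
  have "real (card ?C) * c \<le> (\<Sum>T\<in>?C. alpha_sum N W I T)"
    using sum_bounded_below[of ?C c "alpha_sum N W I"] assms(4) by simp
  also have "\<dots> \<le> alpha_sum N W I S * real (card ?C)"
    using sum_alpha_sum_loyal_children_le[OF assms(1,2)] .
  finally show ?thesis
    using finite_loyal_children[OF assms(1,2)] assms(3) by (simp add: card_gt_0_iff mult.commute)
qed

text \<open>Along loyal children U stays losing and U \<union> I winning, so eventually some member of I
  becomes NO-decisive; superharmonicity carries the bound back to U.\<close>
lemma alpha_sum_ge_1_if_swing:
  assumes "svg N W" "I \<subseteq> N"
  shows "U \<subseteq> N \<Longrightarrow> U \<notin> W \<Longrightarrow> U \<union> I \<in> W \<Longrightarrow> 1 \<le> alpha_sum N W I U"
proof (induction "card (N - U)" arbitrary: U rule: less_induct)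
  case less
  have finN: "finite N" and finI: "finite I"
    using assms by (auto simp: svg_def intro: finite_subset)
  show ?case
  proof (cases "\<exists>k\<in>I - U. insert k U \<in> W")
    case True
    then show ?thesis
      using less.prems alpha_sum_ge_1_if_decisive[OF finI] by (auto simp: decisive_def no_decisive_def)
  next
    case False
    obtain k where k: "k \<in> I" "k \<notin> U"
      using less.prems by (metis Un_absorb2 subsetI)
    have "insert k U \<in> loyal_children N W U"
      using k False less.prems assms(2) by (auto simp: loyal_children_def)
    moreover have "1 \<le> alpha_sum N W I T" if T: "T \<in> loyal_children N W U" for T
    proof (rule less.hyps)
      obtain m where m: "T = insert m U" "m \<in> N" "m \<notin> U" "insert m U \<notin> W"
        using T less.prems by (auto simp: loyal_children_def)
      show "T \<subseteq> N" "T \<notin> W" using m less.prems by auto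
      have "U \<union> I \<subseteq> T \<union> I" "T \<union> I \<subseteq> N" using m less.prems assms(2) by auto
      then show "T \<union> I \<in> W" using svg_winning_mono[OF assms(1) less.prems(3)] by blast
      show "card (N - T) < card (N - U)"
        using loyal_rank_less[OF finN less.prems(1) T] m less.prems(2) by (simp add: loyal_rank_def)
    qed
    ultimately show ?thesis
      using alpha_sum_ge_if_loyal_children_ge[OF finN less.prems(1)] by blast
  qed
qed

definition dual_game :: "'a set \<Rightarrow> 'a set set \<Rightarrow> 'a set set" where
  "dual_game N W = {S. S \<subseteq> N \<and> N - S \<notin> W}"

lemma svg_dual_game:
  assumes "svg N W"
  shows "svg N (dual_game N W)"
proof -
  have "N - T \<notin> W" if "N - S \<notin> W" "S \<subseteq> T" for S T
    using assms that unfolding svg_def by (meson Diff_mono Diff_subset order_refl)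
  then show ?thesis using assms unfolding svg_def dual_game_def by auto
qed

lemma yes_blocker_dual_game: "b \<in> N \<Longrightarrow> no_blocker N W b \<Longrightarrow> yes_blocker (dual_game N W) b"
  unfolding no_blocker_def yes_blocker_def dual_game_def by auto

lemma decisive_dual_game:
  assumes "S \<subseteq> N" "k \<in> N"
  shows "decisive (dual_game N W) k (N - S) \<longleftrightarrow> decisive W k S"
proof -
  have "N - (N - S) = S" "N - insert k (N - S) = S - {k}" "N - (N - S - {k}) = insert k S"
    using assms by auto
  then show ?thesis
    unfolding decisive_def yes_decisive_def no_decisive_def dual_game_def using assms by auto
qed

lemma successful_dual_game:
  "S \<subseteq> N \<Longrightarrow> k \<in> N \<Longrightarrow> successful (dual_game N W) k (N - S) \<longleftrightarrow> successful W k S"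
  unfolding successful_def dual_game_def by (auto simp: double_diff)

lemma loyal_children_dual_game:
  assumes "S \<subseteq> N"
  shows "loyal_children N (dual_game N W) (N - S) = (\<lambda>T. N - T) ` loyal_children N W S"
proof (cases "S \<in> W")
  case True
  have "N - S \<notin> dual_game N W"
    using True assms by (auto simp: dual_game_def double_diff)
  then have "loyal_children N (dual_game N W) (N - S)
      = (\<lambda>m. insert m (N - S)) ` {m \<in> N - (N - S). insert m (N - S) \<notin> dual_game N W}"
    by (rule loyal_children_losing)
  also have "\<dots> = (\<lambda>m. N - (S - {m})) ` {m \<in> S. S - {m} \<in> W}"
  proof (intro image_cong)
    have "N - insert m (N - S) = S - {m}" if "m \<in> S" for m
      using assms that by auto
    then show "{m \<in> N - (N - S). insert m (N - S) \<notin> dual_game N W} = {m \<in> S. S - {m} \<in> W}"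
      using assms by (auto simp: dual_game_def)
  qed (use assms in auto)
  finally show ?thesis by (simp add: loyal_children_winning[OF True] image_image)
next
  case False
  have "N - S \<in> dual_game N W"
    using False assms by (auto simp: dual_game_def double_diff)
  then have "loyal_children N (dual_game N W) (N - S)
      = (\<lambda>m. N - S - {m}) ` {m \<in> N - S. N - S - {m} \<in> dual_game N W}"
    by (rule loyal_children_winning)
  also have "\<dots> = (\<lambda>m. N - insert m S) ` {m \<in> N - S. insert m S \<notin> W}"
  proof (intro image_cong)
    have "N - (N - S - {m}) = insert m S" if "m \<in> N" for m
      using assms that by auto
    then show "{m \<in> N - S. N - S - {m} \<in> dual_game N W} = {m \<in> N - S. insert m S \<notin> W}"
      by (auto simp: dual_game_def)
  qed auto
  finally show ?thesis by (simp add: loyal_children_losing[OF False] image_image)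
qed

lemma alpha_fuel_dual_game:
  assumes "k \<in> N"
  shows "S \<subseteq> N \<Longrightarrow> alpha_fuel d N (dual_game N W) k (N - S) = alpha_fuel d N W k S"
proof (induction d arbitrary: S)
  case (Suc d)
  let ?C = "loyal_children N W S"
  have inj: "inj_on (\<lambda>T. N - T) ?C"
    using loyal_children_subset[OF Suc.prems] by (intro inj_onI) (metis double_diff order_refl)
  have "(\<Sum>T\<in>(\<lambda>T. N - T) ` ?C. alpha_fuel d N (dual_game N W) k T) = (\<Sum>T\<in>?C. alpha_fuel d N W k T)"
    using Suc.IH loyal_children_subset[OF Suc.prems] by (simp add: sum.reindex[OF inj])
  then show ?case
    using Suc.prems assms
    by (simp add: decisive_dual_game successful_dual_game loyal_children_dual_game card_image[OF inj])
qed simp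

lemma alpha_dual_game:
  "S \<subseteq> N \<Longrightarrow> k \<in> N \<Longrightarrow> alpha N (dual_game N W) k (N - S) = alpha N W k S"
  unfolding alpha_def by (rule alpha_fuel_dual_game)

lemma RM'_dual_game:
  assumes "k \<in> N"
  shows "RM' N (dual_game N W) k = RM' N W k"
proof -
  have "alpha N (dual_game N W) k S = alpha N W k (N - S)" if "S \<subseteq> N" for S
    using alpha_dual_game[of "N - S" N k W] assms that by (simp add: double_diff)
  then have "(\<Sum>S\<in>Pow N. alpha N (dual_game N W) k S) = (\<Sum>S\<in>Pow N. alpha N W k S)"
    by (intro sum.reindex_bij_witness[of _ "\<lambda>S. N - S" "\<lambda>S. N - S"]) (auto simp: double_diff)
  then show ?thesis unfolding RM'_def by simp
qed

lemma bloc_W_iff: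
  assumes "i \<in> I"
  shows "X \<in> bloc_W N W I i \<longleftrightarrow>
    (if i \<in> X then X - {i} \<subseteq> N - I \<and> (X - {i}) \<union> I \<in> W else X \<subseteq> N - I \<and> X \<in> W)"
proof (cases "i \<in> X")
  case True
  have "X \<in> bloc_W N W I i \<longleftrightarrow> (\<exists>S. X = S \<union> {i} \<and> S \<subseteq> N - I \<and> S \<union> I \<in> W)"
    using True assms unfolding bloc_W_def by blast
  also have "\<dots> \<longleftrightarrow> X - {i} \<subseteq> N - I \<and> (X - {i}) \<union> I \<in> W"
  proof
    assume "X - {i} \<subseteq> N - I \<and> (X - {i}) \<union> I \<in> W"
    moreover have "X = (X - {i}) \<union> {i}" using True by blast
    ultimately show "\<exists>S. X = S \<union> {i} \<and> S \<subseteq> N - I \<and> S \<union> I \<in> W" by blast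
  next
    assume "\<exists>S. X = S \<union> {i} \<and> S \<subseteq> N - I \<and> S \<union> I \<in> W"
    then obtain S where "X = S \<union> {i}" "S \<subseteq> N - I" "S \<union> I \<in> W" by blast
    moreover have "X - {i} = S" using calculation assms by blast
    ultimately show "X - {i} \<subseteq> N - I \<and> (X - {i}) \<union> I \<in> W" by simp
  qed
  finally show ?thesis using True by simp
qed (auto simp: bloc_W_def)

lemma bloc_W_dual_game:
  assumes "I \<subseteq> N" "i \<in> I"
  shows "bloc_W N (dual_game N W) I i = dual_game (bloc_players N I i) (bloc_W N W I i)"
proof (intro set_eqI)
  fix X
  let ?M = "bloc_players N I i"
  show "X \<in> bloc_W N (dual_game N W) I i \<longleftrightarrow> X \<in> dual_game ?M (bloc_W N W I i)"
  proof (cases "i \<in> X")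
    case True
    have "i \<notin> ?M - X" "?M - X = N - ((X - {i}) \<union> I)"
      using True assms by (auto simp: bloc_players_def)
    then show ?thesis
      using True assms by (auto simp: bloc_W_iff dual_game_def bloc_players_def)
  next
    case False
    show ?thesis
    proof (cases "X \<subseteq> N - I")
      case True
      have "i \<in> ?M - X" "(?M - X - {i}) \<union> I = N - X"
        using False True assms by (auto simp: bloc_players_def)
      then show ?thesis
        using False True assms by (auto simp: bloc_W_iff dual_game_def bloc_players_def)
    qed (use False assms in \<open>auto simp: bloc_W_iff dual_game_def bloc_players_def\<close>)
  qed
qed

lemma sum_Pow_insert:
  assumes "finite A" "x \<notin> A"
  shows "sum f (Pow (insert x A)) = (\<Sum>S\<in>Pow A. f S + f (insert x S))"
proof -
  have inj: "inj_on (insert x) (Pow A)"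
    using assms(2) by (auto simp: inj_on_def)
  have "sum f (Pow (insert x A)) = sum f (Pow A) + sum f (insert x ` Pow A)"
    unfolding Pow_insert using assms by (intro sum.union_disjoint) auto
  then show ?thesis by (simp add: sum.distrib sum.reindex[OF inj])
qed

lemma sum_Pow_Un:
  assumes "finite A" "finite B" "A \<inter> B = {}"
  shows "sum f (Pow (A \<union> B)) = (\<Sum>S\<in>Pow A. \<Sum>J\<in>Pow B. f (S \<union> J))"
  using assms(2,3)
proof (induction B arbitrary: f rule: finite_induct)
  case (insert x B)
  have "sum f (Pow (A \<union> insert x B)) = (\<Sum>U\<in>Pow (A \<union> B). f U + f (insert x U))"
    using sum_Pow_insert[of "A \<union> B" x f] assms(1) insert by simp
  also have "\<dots> = (\<Sum>S\<in>Pow A. \<Sum>J\<in>Pow B. f (S \<union> J) + f (insert x (S \<union> J)))"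
    using insert.IH[of "\<lambda>U. f U + f (insert x U)"] insert.prems by simp
  also have "\<dots> = (\<Sum>S\<in>Pow A. \<Sum>J\<in>Pow (insert x B). f (S \<union> J))"
    by (rule sum.cong[OF refl]) (simp add: sum_Pow_insert[OF insert(1,2)])
  finally show ?case .
qed simp

text \<open>The bloc divisions S, S \<union> {i} (S \<subseteq> N - I) are charged to the 2 ^ card (I - {b}) pairs
  S \<union> J, S \<union> J \<union> {b} with J \<subseteq> I - {b}; this is exactly the ratio of the normalising factors.\<close>
lemma RM'_bloc_le_if_paired:
  assumes finN: "finite N" and I: "I \<subseteq> N" and i: "i \<in> I" and b: "b \<in> I"
    and paired: "\<And>S J. S \<subseteq> N - I \<Longrightarrow> J \<subseteq> I - {b} \<Longrightarrow>
      alpha (bloc_players N I i) (bloc_W N W I i) i S + alpha (bloc_players N I i) (bloc_W N W I i) i (insert i S)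
        \<le> alpha_sum N W I (S \<union> J) + alpha_sum N W I (insert b (S \<union> J))"
  shows "RM' (bloc_players N I i) (bloc_W N W I i) i \<le> (\<Sum>k\<in>I. RM' N W k)"
proof -
  let ?a = "alpha (bloc_players N I i) (bloc_W N W I i) i"
  define A where "A = N - I"
  define B where "B = I - {b}"
  have finA: "finite A" and finB: "finite B" and disj: "A \<inter> B = {}" and bAB: "b \<notin> A \<union> B"
    and N: "N = insert b (A \<union> B)" and M: "bloc_players N I i = insert i A" and iA: "i \<notin> A"
    using finN I i b by (auto simp: A_def B_def bloc_players_def intro: finite_subset)
  define G where "G = (\<Sum>S\<in>Pow A. ?a S + ?a (insert i S))"
  have "2 ^ card B * G = (\<Sum>S\<in>Pow A. \<Sum>J\<in>Pow B. ?a S + ?a (insert i S))"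
    unfolding G_def using finB by (simp add: card_Pow sum_distrib_left)
  also have "\<dots> \<le> (\<Sum>S\<in>Pow A. \<Sum>J\<in>Pow B. alpha_sum N W I (S \<union> J) + alpha_sum N W I (insert b (S \<union> J)))"
    by (intro sum_mono paired) (auto simp: A_def B_def)
  also have "\<dots> = (\<Sum>U\<in>Pow N. alpha_sum N W I U)"
    unfolding N using finA finB bAB disj by (simp add: sum_Pow_insert sum_Pow_Un)
  finally have paired_sum: "2 ^ card B * G \<le> (\<Sum>U\<in>Pow N. alpha_sum N W I U)" .
  have "card N = card A + card B + 1"
    unfolding N using finA finB bAB disj by (simp add: card_Un_disjoint)
  then have "RM' (bloc_players N I i) (bloc_W N W I i) i = 2 ^ card B * G / 2 ^ card N"
    unfolding RM'_def M G_def using finA iA by (simp add: sum_Pow_insert power_add)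
  also have "\<dots> \<le> (\<Sum>U\<in>Pow N. alpha_sum N W I U) / 2 ^ card N"
    using paired_sum by (simp add: divide_right_mono)
  also have "\<dots> = (\<Sum>k\<in>I. RM' N W k)"
    unfolding RM'_def alpha_sum_def by (simp add: sum_divide_distrib[symmetric] sum.swap[of _ I])
  finally show ?thesis .
qed

context
  fixes N :: "'a set" and W :: "'a set set" and I :: "'a set" and i b :: 'a
  assumes svg: "svg N W" and I: "I \<subseteq> N" and i: "i \<in> I"
    and b: "b \<in> I" and yes_blocker: "yes_blocker W b"
begin

abbreviation bloc_alpha :: "'a set \<Rightarrow> real" where
  "bloc_alpha \<equiv> alpha (bloc_players N I i) (bloc_W N W I i) i"

lemma finite_N: "finite N"
  using svg by (simp add: svg_def)

lemma finite_I: "finite I"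
  using finite_N I by (rule finite_subset[rotated])

lemma winning_yes_blocker: "U \<in> W \<Longrightarrow> b \<in> U"
  using yes_blocker by (simp add: yes_blocker_def)

lemma bloc_W_iff_yes_blocker:
  "X \<in> bloc_W N W I i \<longleftrightarrow> i \<in> X \<and> X - {i} \<subseteq> N - I \<and> (X - {i}) \<union> I \<in> W"
proof -
  have "\<not> (X \<subseteq> N - I \<and> X \<in> W)"
    using b winning_yes_blocker by blast
  then show ?thesis unfolding bloc_W_iff[OF i] by auto
qed

lemma bloc_alpha_insert_lead:
  assumes "S \<subseteq> N - I"
  shows "bloc_alpha (insert i S) = (if S \<union> I \<in> W then 1 else 0)"
proof -
  have iS: "i \<notin> S" and eq: "insert i S - {i} = S"
    using assms i by auto
  show ?thesis
  proof (cases "S \<union> I \<in> W")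
    case True
    then have "decisive (bloc_W N W I i) i (insert i S)"
      using assms iS eq by (simp add: decisive_def yes_decisive_def bloc_W_iff_yes_blocker)
    then show ?thesis using True by (simp add: alpha_decisive)
  next
    case False
    then have "\<not> successful (bloc_W N W I i) i (insert i S)"
      using eq by (simp add: successful_def bloc_W_iff_yes_blocker)
    then show ?thesis using False by (simp add: alpha_unsuccessful)
  qed
qed

lemma bloc_alpha_mean:
  assumes S: "S \<subseteq> N - I" and SI: "S \<union> I \<notin> W"
  shows "bloc_alpha S * (real (card (N - I - S)) + 1) = (\<Sum>m\<in>N - I - S. bloc_alpha (insert m S))"
proof -
  let ?M = "bloc_players N I i" and ?W = "bloc_W N W I i"
  have iS: "i \<notin> S" and eq: "insert i S - {i} = S" and MS: "S \<subseteq> ?M"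
    using S i by (auto simp: bloc_players_def)
  have SW: "S \<notin> ?W" and iSW: "insert i S \<notin> ?W"
    using iS eq SI by (auto simp: bloc_W_iff_yes_blocker)
  have "{m \<in> ?M - S. insert m S \<notin> ?W} = insert i (N - I - S)"
    using iS iSW by (auto simp: bloc_players_def bloc_W_iff_yes_blocker)
  then have children: "loyal_children ?M ?W S = insert (insert i S) ((\<lambda>m. insert m S) ` (N - I - S))"
    by (simp add: loyal_children_losing[OF SW])
  have inj: "inj_on (\<lambda>m. insert m S) (N - I - S)" and new: "insert i S \<notin> (\<lambda>m. insert m S) ` (N - I - S)"
    using i iS by (auto simp: inj_on_def)
  have "\<not> decisive ?W i S" "successful ?W i S"
    using iS SW iSW by (auto simp: decisive_def yes_decisive_def no_decisive_def successful_def)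
  then have "bloc_alpha S = (\<Sum>T\<in>loyal_children ?M ?W S. bloc_alpha T) / card (loyal_children ?M ?W S)"
    using alpha_unfold[of ?M S ?W i] finite_N MS by (simp add: bloc_players_def)
  also have "\<dots> = (bloc_alpha (insert i S) + (\<Sum>m\<in>N - I - S. bloc_alpha (insert m S)))
      / (real (card (N - I - S)) + 1)"
    using finite_N new unfolding children by (simp add: sum.reindex[OF inj] card_image[OF inj])
  finally have "bloc_alpha S = \<dots>" .
  moreover have "bloc_alpha (insert i S) = 0"
    using bloc_alpha_insert_lead[OF S] SI by simp
  ultimately show ?thesis by (simp add: field_simps)
qed

lemma sum_alpha_sum_insert_le:
  assumes U: "U \<subseteq> N" "b \<notin> U" and bU: "insert b U \<notin> W"
  shows "(\<Sum>m\<in>N - U. alpha_sum N W I (insert m U)) \<le> alpha_sum N W I U * real (card (N - U))"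
proof -
  have "U \<notin> W"
    using U winning_yes_blocker by blast
  moreover have "insert m U \<notin> W" if "m \<in> N - U" for m
    using that bU U winning_yes_blocker by (cases "m = b") auto
  ultimately have children: "loyal_children N W U = (\<lambda>m. insert m U) ` (N - U)"
    by (auto simp: loyal_children_losing)
  have inj: "inj_on (\<lambda>m. insert m U) (N - U)"
    by (auto simp: inj_on_def)
  show ?thesis
    using sum_alpha_sum_loyal_children_le[OF finite_N U(1), of W I]
    unfolding children by (simp add: sum.reindex[OF inj] card_image[OF inj])
qed

text \<open>The loyal children of S in the bloc game add a player of N - I - S or the lead member
  (who then scores 0); those of S \<union> J add the same players or a member of I - J, which is
  absorbed into J unless it is b.\<close>
lemma bloc_alpha_le_alpha_sum:
  "S \<subseteq> N - I \<Longrightarrow> J \<subseteq> I - {b} \<Longrightarrow> bloc_alpha S \<le> alpha_sum N W I (S \<union> J)"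
proof (induction "card (N - (S \<union> J))" arbitrary: S J rule: less_induct)
  case less
  define U where "U = S \<union> J"
  have UN: "U \<subseteq> N" and bU: "b \<notin> U" and UI: "U \<union> I = S \<union> I"
    using less.prems I b by (auto simp: U_def)
  have UW: "U \<notin> W"
    using bU winning_yes_blocker by blast
  have card_less: "card (N - insert m U) < card (N - U)" if "m \<in> N - U" for m
  proof -
    have "card (N - U - {m}) < card (N - U)"
      using that finite_N by (intro card_Diff1_less) auto
    moreover have "N - insert m U = N - U - {m}"
      by blast
    ultimately show ?thesis by (simp only:)
  qed
  show ?case
  proof (cases "S \<union> I \<in> W")
    case True
    then have "1 \<le> alpha_sum N W I U"
      using alpha_sum_ge_1_if_swing[OF svg I UN UW] UI by simp
    then show ?thesis
      using alpha_le_1 unfolding U_def by (rule order.trans[rotated])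
  next
    case False
    have bW: "insert b U \<notin> W"
    proof
      assume "insert b U \<in> W"
      moreover have "insert b U \<subseteq> U \<union> I" "U \<union> I \<subseteq> N" using b UN I by auto
      ultimately show False using svg_winning_mono[OF svg] False UI by metis
    qed
    define x where "x = card (N - I - S)"
    define y where "y = card (I - {b} - J)"
    have "(real x + 1) * bloc_alpha S = (\<Sum>m\<in>N - I - S. bloc_alpha (insert m S))"
      using bloc_alpha_mean[OF less.prems(1) False] by (simp add: x_def mult.commute)
    also have "\<dots> \<le> (\<Sum>m\<in>N - I - S. alpha_sum N W I (insert m U))"
    proof (rule sum_mono)
      fix m assume m: "m \<in> N - I - S"
      then have "m \<in> N - U"
        using less.prems(2) by (auto simp: U_def)
      from card_less[OF this] have card: "card (N - (insert m S \<union> J)) < card (N - (S \<union> J))"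
        by (simp only: U_def Un_insert_left)
      have "insert m S \<subseteq> N - I"
        using m less.prems(1) by auto
      from less.hyps[OF card this less.prems(2)]
      show "bloc_alpha (insert m S) \<le> alpha_sum N W I (insert m U)"
        by (simp add: U_def)
    qed
    finally have outside: "(real x + 1) * bloc_alpha S \<le> (\<Sum>m\<in>N - I - S. alpha_sum N W I (insert m U))" .
    have "real y * bloc_alpha S = (\<Sum>m\<in>I - {b} - J. bloc_alpha S)"
      by (simp add: y_def)
    also have "\<dots> \<le> (\<Sum>m\<in>I - {b} - J. alpha_sum N W I (insert m U))"
    proof (rule sum_mono)
      fix m assume m: "m \<in> I - {b} - J"
      then have "m \<in> N - U"
        using less.prems(1) I by (auto simp: U_def)
      from card_less[OF this] have card: "card (N - (S \<union> insert m J)) < card (N - (S \<union> J))"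
        by (simp only: U_def Un_insert_right)
      have "insert m J \<subseteq> I - {b}"
        using m less.prems(2) by auto
      from less.hyps[OF card less.prems(1) this]
      show "bloc_alpha S \<le> alpha_sum N W I (insert m U)"
        by (simp add: U_def)
    qed
    also have "\<dots> \<le> (\<Sum>m\<in>I - J. alpha_sum N W I (insert m U))"
      using finite_I b less.prems(2) alpha_sum_nonneg
      by (intro sum_mono2) (auto simp: Diff_insert2[symmetric])
    finally have inside: "real y * bloc_alpha S \<le> (\<Sum>m\<in>I - J. alpha_sum N W I (insert m U))" .
    have split: "N - U = (N - I - S) \<union> (I - J)" and disjoint: "(N - I - S) \<inter> (I - J) = {}"
      using less.prems I by (auto simp: U_def)
    have "I - J = insert b (I - {b} - J)"
      using b less.prems(2) by auto
    then have "card (I - J) = y + 1"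
      using finite_I by (simp add: y_def)
    then have card_NU: "card (N - U) = x + y + 1"
      using finite_N finite_I unfolding split x_def by (simp add: card_Un_disjoint[OF _ _ disjoint])
    have "(real x + real y + 1) * bloc_alpha S \<le> (\<Sum>m\<in>N - U. alpha_sum N W I (insert m U))"
      using outside inside finite_N finite_I unfolding split
      by (simp add: sum.union_disjoint[OF _ _ disjoint] algebra_simps)
    also have "\<dots> \<le> alpha_sum N W I U * (real x + real y + 1)"
      using sum_alpha_sum_insert_le[OF UN bU bW] card_NU by (simp add: add.commute)
    finally show ?thesis
      by (simp add: U_def mult.commute add_pos_nonneg)
  qed
qed

lemma bloc_alpha_pair_le:
  assumes S: "S \<subseteq> N - I" and J: "J \<subseteq> I - {b}"
  shows "bloc_alpha S + bloc_alpha (insert i S)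
    \<le> alpha_sum N W I (S \<union> J) + alpha_sum N W I (insert b (S \<union> J))"
proof (cases "S \<union> I \<in> W")
  case True
  define U where "U = S \<union> J"
  have UN: "U \<subseteq> N" "insert b U \<subseteq> N" and bU: "b \<notin> U"
    and UI: "U \<union> I = S \<union> I" "insert b U \<union> I = S \<union> I"
    using S J I b by (auto simp: U_def)
  have UW: "U \<notin> W"
    using bU winning_yes_blocker by blast
  have "1 \<le> alpha_sum N W I U"
    using alpha_sum_ge_1_if_swing[OF svg I UN(1) UW] UI True by simp
  moreover have "1 \<le> alpha_sum N W I (insert b U)"
  proof (cases "insert b U \<in> W")
    case True
    then have "decisive W b (insert b U)"
      using UW bU by (simp add: decisive_def yes_decisive_def)
    then show ?thesis by (rule alpha_sum_ge_1_if_decisive[OF finite_I b])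
  next
    case False
    then show ?thesis
      using alpha_sum_ge_1_if_swing[OF svg I UN(2)] UI True by simp
  qed
  ultimately show ?thesis
    using alpha_le_1[of "bloc_players N I i" "bloc_W N W I i" i S] bloc_alpha_insert_lead[OF S] True
    unfolding U_def by simp
next
  case False
  then show ?thesis
    using bloc_alpha_insert_lead[OF S] bloc_alpha_le_alpha_sum[OF S J]
      alpha_sum_nonneg[of N W I "insert b (S \<union> J)"] by simp
qed

lemma RM'_bloc_le_sum_RM'_yes_blocker:
  "RM' (bloc_players N I i) (bloc_W N W I i) i \<le> (\<Sum>k\<in>I. RM' N W k)"
  using finite_N I i b bloc_alpha_pair_le by (rule RM'_bloc_le_if_paired)

end

theorem theorem3:
  fixes N :: "'a set" and W :: "'a set set" and I :: "'a set" and i :: 'a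
  assumes "svg N W"
    and "I \<subseteq> N" and "i \<in> I"
    and "(\<exists>b\<in>I. yes_blocker W b) \<or> (\<exists>b\<in>I. no_blocker N W b)"
  shows "RM' (bloc_players N I i) (bloc_W N W I i) i \<le> (\<Sum>k\<in>I. RM' N W k)"
  using assms(4)
proof
  assume "\<exists>b\<in>I. yes_blocker W b"
  then obtain b where "b \<in> I" "yes_blocker W b" ..
  with assms(1-3) show ?thesis by (rule RM'_bloc_le_sum_RM'_yes_blocker)
next
  assume "\<exists>b\<in>I. no_blocker N W b"
  then obtain b where b: "b \<in> I" "no_blocker N W b" ..
  have "b \<in> N" "i \<in> bloc_players N I i"
    using b(1) assms(2) by (auto simp: bloc_players_def)
  have "RM' (bloc_players N I i) (bloc_W N W I i) i
      = RM' (bloc_players N I i) (bloc_W N (dual_game N W) I i) i"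
    unfolding bloc_W_dual_game[OF assms(2,3)] using RM'_dual_game[OF \<open>i \<in> bloc_players N I i\<close>] ..
  also have "\<dots> \<le> (\<Sum>k\<in>I. RM' N (dual_game N W) k)"
    using svg_dual_game[OF assms(1)] assms(2,3) b(1) yes_blocker_dual_game[OF \<open>b \<in> N\<close> b(2)]
    by (rule RM'_bloc_le_sum_RM'_yes_blocker)
  also have "\<dots> = (\<Sum>k\<in>I. RM' N W k)"
    using assms(2) by (intro sum.cong refl RM'_dual_game) blast
  finally show ?thesis .
qed

end
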